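(* Let $w$ be a word of length $k$. Then for every $n \ge 2k$, $h_w(n) \ge \sum_{t=1}^{k-1} H_w(n+t)$.
   Context: Let $\Omega$ be a finite alphabet with $q\ge2$ letters; $w = w_k\dots w_1$ a word of length $k$. $h_w(n)$: number of strings of length $n$ over $\Omega$ whose last $k$ characters form $w$ and which contain $w$ as a block of $k$ consecutive characters nowhere else. $H_w(n) = q h_w(n-1) - h_w(n)$; for $n>k$ this is the number of strings of length $n$ beginning and ending with $w$ with no other occurrence of $w$. *)

theory Defs
  imports Main
begin

definition occurs_at :: "'a list \<Rightarrow> 'a list \<Rightarrow> nat \<Rightarrow> bool" where
  "occurs_at w s i \<longleftrightarrow> i + length w \<le> length s \<and> take (length w) (drop i s) = w"

definition h_w :: "'a set \<Rightarrow> 'a list \<Rightarrow> nat \<Rightarrow> nat" where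
  "h_w Omega w n = card {s. length s = n \<and> set s \<subseteq> Omega \<and>
      length w \<le> n \<and> occurs_at w s (n - length w) \<and>
      (\<forall>i. occurs_at w s i \<longrightarrow> i = n - length w)}"

definition H_w :: "'a set \<Rightarrow> 'a list \<Rightarrow> nat \<Rightarrow> int" where
  "H_w Omega w n = int (card Omega) * int (h_w Omega w (n - 1)) - int (h_w Omega w n)"

end

theory Submission imports Defs begin

text \<open>Let \<open>k = |w|\<close>, let \<open>S(n)\<close> be the strings counted by \<open>h_w(n)\<close> and \<open>B(n)\<close>
  those beginning and ending with \<open>w\<close> with no other occurrence. Prepending a letter to a
  string of \<open>S(n)\<close> yields a string of \<open>S(n+1)\<close> or of \<open>B(n+1)\<close>, so
  \<open>H_w(n) = |B(n)|\<close> for \<open>n > k\<close>. The recursion for \<open>H_w\<close> telescopes the defect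
  \<open>h_w(n) - \<Sum>\<^sub>t H_w(n+t)\<close> into its value \<open>1 - \<Sum>\<^sub>t |B(k+t)|\<close> at \<open>n = k\<close> plus the
  increments \<open>(q-1) h_w(j) - |B(j+k)|\<close> for \<open>k \<le> j < n\<close>. Deleting the leading \<open>w\<close>
  embeds \<open>B(j+k)\<close> into \<open>S(j)\<close>, so the increments are nonnegative. \<open>B(k+t)\<close> is
  nonempty only if \<open>t\<close> is a period of \<open>w\<close>; for the largest period \<open>P\<close>, \<open>B(j+k)\<close>
  and \<open>B(j+k-P)\<close> embed disjointly into \<open>S(j)\<close>, so the increment at \<open>j = t + P\<close>
  pays for the initial term \<open>|B(k+t)|\<close>.\<close>

definition only_at_end_strings :: "'a set \<Rightarrow> 'a list \<Rightarrow> nat \<Rightarrow> 'a list set" where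
  "only_at_end_strings Omega w n = {s. length s = n \<and> set s \<subseteq> Omega \<and> length w \<le> n \<and>
      occurs_at w s (n - length w) \<and> (\<forall>i. occurs_at w s i \<longrightarrow> i = n - length w)}"

definition only_at_ends_strings :: "'a set \<Rightarrow> 'a list \<Rightarrow> nat \<Rightarrow> 'a list set" where
  "only_at_ends_strings Omega w n = {s. length s = n \<and> set s \<subseteq> Omega \<and>
      occurs_at w s 0 \<and> occurs_at w s (n - length w) \<and>
      (\<forall>i. occurs_at w s i \<longrightarrow> i = 0 \<or> i = n - length w)}"

definition is_period :: "'a list \<Rightarrow> nat \<Rightarrow> bool" where
  "is_period w p \<longleftrightarrow> 0 < p \<and> p < length w \<and> (\<forall>i. i + p < length w \<longrightarrow> w ! i = w ! (i + p))"

lemma h_w_eq_card: "h_w Omega w n = card (only_at_end_strings Omega w n)"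
  by (simp add: h_w_def only_at_end_strings_def)

lemma finite_only_at_end_strings: "finite Omega \<Longrightarrow> finite (only_at_end_strings Omega w n)"
  by (rule finite_subset[OF _ finite_lists_length_eq[of Omega n]])
    (auto simp: only_at_end_strings_def)

lemma finite_only_at_ends_strings: "finite Omega \<Longrightarrow> finite (only_at_ends_strings Omega w n)"
  by (rule finite_subset[OF _ finite_lists_length_eq[of Omega n]])
    (auto simp: only_at_ends_strings_def)

lemma occurs_at_Cons_Suc: "occurs_at w (c # s) (Suc i) = occurs_at w s i"
  by (simp add: occurs_at_def)

lemma occurs_at_drop: "j \<le> length s \<Longrightarrow> occurs_at w (drop j s) i = occurs_at w s (j + i)"
  by (auto simp: occurs_at_def add.commute)

lemma only_at_end_strings_length: "set w \<subseteq> Omega \<Longrightarrow> only_at_end_strings Omega w (length w) = {w}"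
  by (auto simp: only_at_end_strings_def occurs_at_def)

lemma take_only_at_ends_strings:
  "s \<in> only_at_ends_strings Omega w n \<Longrightarrow> take (length w) s = w"
  by (simp add: only_at_ends_strings_def occurs_at_def)

lemma only_at_end_strings_Un_only_at_ends_strings:
  "s \<in> only_at_end_strings Omega w n \<union> only_at_ends_strings Omega w n \<longleftrightarrow>
     length s = n \<and> set s \<subseteq> Omega \<and> length w \<le> n \<and> occurs_at w s (n - length w) \<and>
     (\<forall>i. occurs_at w s i \<longrightarrow> i = 0 \<or> i = n - length w)"
  by (auto simp: only_at_end_strings_def only_at_ends_strings_def occurs_at_def)

lemma Cons_only_at_end_strings_iff:
  assumes "length w \<le> n"
  shows "c # s \<in> only_at_end_strings Omega w (Suc n) \<union> only_at_ends_strings Omega w (Suc n)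
     \<longleftrightarrow> c \<in> Omega \<and> s \<in> only_at_end_strings Omega w n"
proof -
  have end_pos: "Suc n - length w = Suc (n - length w)"
    using assms by simp
  have "(\<forall>i. occurs_at w (c # s) i \<longrightarrow> i = 0 \<or> i = Suc (n - length w))
      \<longleftrightarrow> (\<forall>i. occurs_at w s i \<longrightarrow> i = n - length w)"
  proof (intro iffI allI impI)
    fix i
    assume "\<forall>i. occurs_at w (c # s) i \<longrightarrow> i = 0 \<or> i = Suc (n - length w)" and "occurs_at w s i"
    then show "i = n - length w"
      by (metis occurs_at_Cons_Suc nat.distinct(1) nat.inject)
  next
    fix i
    assume "\<forall>i. occurs_at w s i \<longrightarrow> i = n - length w" and "occurs_at w (c # s) i"
    then show "i = 0 \<or> i = Suc (n - length w)"
      by (cases i) (auto simp: occurs_at_Cons_Suc)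
  qed
  then show ?thesis
    using assms unfolding only_at_end_strings_Un_only_at_ends_strings end_pos
    by (auto simp: only_at_end_strings_def occurs_at_Cons_Suc)
qed

lemma card_times_only_at_end_strings:
  assumes "finite Omega" and "length w \<le> n"
  shows "card Omega * card (only_at_end_strings Omega w n)
           = card (only_at_end_strings Omega w (Suc n)) + card (only_at_ends_strings Omega w (Suc n))"
proof -
  let ?S = "only_at_end_strings Omega w" and ?B = "only_at_ends_strings Omega w"
  let ?cons = "\<lambda>(c, s). c # s"
  have image: "?cons ` (Omega \<times> ?S n) = ?S (Suc n) \<union> ?B (Suc n)"
  proof (intro equalityI subsetI)
    fix s assume s: "s \<in> ?S (Suc n) \<union> ?B (Suc n)"
    then obtain c s' where "s = c # s'"
      by (cases s) (auto simp: only_at_end_strings_def only_at_ends_strings_def)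
    with s show "s \<in> ?cons ` (Omega \<times> ?S n)"
      using Cons_only_at_end_strings_iff[OF assms(2)] by force
  qed (use Cons_only_at_end_strings_iff[OF assms(2)] in auto)
  have "?S (Suc n) \<inter> ?B (Suc n) = {}"
    using assms(2) by (auto simp: only_at_end_strings_def only_at_ends_strings_def)
  then have "card (?S (Suc n) \<union> ?B (Suc n)) = card (?S (Suc n)) + card (?B (Suc n))"
    using assms(1) by (simp add: card_Un_disjoint finite_only_at_end_strings finite_only_at_ends_strings)
  moreover have "inj_on ?cons (Omega \<times> ?S n)"
    by (auto simp: inj_on_def)
  ultimately show ?thesis
    by (metis image card_cartesian_product card_image)
qed

lemma H_w_eq_card_only_at_ends_strings:
  assumes "finite Omega" and "length w < n"
  shows "H_w Omega w n = int (card (only_at_ends_strings Omega w n))"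
proof -
  obtain m where n: "n = Suc m" and "length w \<le> m"
    using assms(2) by (cases n) auto
  then show ?thesis
    using card_times_only_at_end_strings[OF assms(1), of w m]
    by (simp add: H_w_def h_w_eq_card flip: of_nat_mult of_nat_add)
qed

lemma drop_only_at_ends_strings:
  assumes u: "u \<in> only_at_ends_strings Omega w M" and "0 < j" and "j + length w \<le> M"
  shows "drop j u \<in> only_at_end_strings Omega w (M - j)"
proof -
  have "length u = M" and "set u \<subseteq> Omega" and "occurs_at w u (M - length w)"
    and unique: "\<And>i. occurs_at w u i \<Longrightarrow> i = 0 \<or> i = M - length w"
    using u by (auto simp: only_at_ends_strings_def)
  moreover have "j + (M - j - length w) = M - length w"
    using assms(3) by simp
  moreover have "occurs_at w u (j + i) \<Longrightarrow> i = M - j - length w" for i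
    using unique[of "j + i"] assms(2) by auto
  ultimately show ?thesis
    using assms(3) set_drop_subset[of j u]
    by (auto simp: only_at_end_strings_def occurs_at_drop)
qed

lemma inj_on_drop_only_at_ends_strings:
  assumes "j \<le> length w"
  shows "inj_on (drop j) (only_at_ends_strings Omega w M)"
proof (rule inj_onI)
  fix u v
  assume "u \<in> only_at_ends_strings Omega w M" "v \<in> only_at_ends_strings Omega w M"
  then have "take j u = take j v"
    using assms take_only_at_ends_strings by (metis min.absorb1 take_take)
  moreover assume "drop j u = drop j v"
  ultimately show "u = v"
    by (metis append_take_drop_id)
qed

lemma card_only_at_ends_strings_le:
  assumes "finite Omega" and "length w \<le> m" and "m < M" and "M \<le> m + length w"
  shows "card (only_at_ends_strings Omega w M) \<le> card (only_at_end_strings Omega w m)"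
proof -
  let ?j = "M - m"
  have "drop ?j ` only_at_ends_strings Omega w M \<subseteq> only_at_end_strings Omega w m"
    using drop_only_at_ends_strings[of _ Omega w M ?j] assms(2-) by auto
  then have "card (drop ?j ` only_at_ends_strings Omega w M) \<le> card (only_at_end_strings Omega w m)"
    using assms(1) by (simp add: card_mono finite_only_at_end_strings)
  moreover have "?j \<le> length w"
    using assms(4) by simp
  ultimately show ?thesis
    by (simp add: card_image inj_on_drop_only_at_ends_strings)
qed

lemma is_period_only_at_ends_strings:
  assumes u: "u \<in> only_at_ends_strings Omega w (length w + r)" and "0 < r" "r < length w"
  shows "is_period w r"
proof -
  have "length u = length w + r" and "take (length w) u = w"
    and "take (length w) (drop r u) = w"
    using u by (auto simp: only_at_ends_strings_def occurs_at_def)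
  then have "w ! i = w ! (i + r)" if "i + r < length w" for i
    using that by (metis add.commute nth_drop nth_take add_lessD1 le_add1)
  then show ?thesis
    using assms(2,3) by (simp add: is_period_def)
qed

lemma is_period_add:
  assumes "is_period w p" and "is_period w r" and "p + r < length w"
  shows "is_period w (p + r)"
proof -
  have "w ! i = w ! (i + (p + r))" if "i + (p + r) < length w" for i
    using assms that unfolding is_period_def by (metis add.assoc add_lessD1)
  then show ?thesis
    using assms by (simp add: is_period_def)
qed

lemma finite_periods: "finite {p. is_period w p}"
  by (rule finite_subset[of _ "{..<length w}"]) (auto simp: is_period_def)

lemma is_period_le_add_Max:
  assumes "is_period w r"
  shows "length w \<le> r + Max {p. is_period w p}"
proof (rule ccontr)
  let ?P = "Max {p. is_period w p}"
  have "is_period w ?P"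
    using assms Max_in[OF finite_periods] by auto
  moreover assume "\<not> length w \<le> r + ?P"
  ultimately have "is_period w (?P + r)"
    using is_period_add[of w ?P r] assms by simp
  then have "?P + r \<le> ?P"
    using Max_ge[OF finite_periods[of w], of "?P + r"] by simp
  then show False
    using assms by (simp add: is_period_def)
qed

lemma is_period_drop_eq_take: "is_period w p \<Longrightarrow> drop p w = take (length w - p) w"
  by (rule nth_equalityI) (auto simp: is_period_def add.commute)

text \<open>Cutting the leading copy of \<open>w\<close> off the strings of length \<open>m + k\<close> and the
  overlapping prefix off those of length \<open>m + k - P\<close> gives disjoint images: a common
  image would be preceded by \<open>w\<close> in the first string and by the first \<open>k - P\<close> letters
  of \<open>w\<close> in the second, so the period \<open>P\<close> would produce a third occurrence of \<open>w\<close>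
  at position \<open>P\<close> of the first string.\<close>

lemma drop_only_at_ends_strings_disjoint:
  assumes P: "is_period w P" and m: "length w \<le> m"
  shows "drop (length w) ` only_at_ends_strings Omega w (m + length w)
           \<inter> drop (length w - P) ` only_at_ends_strings Omega w (m + length w - P) = {}"
proof (rule ccontr)
  let ?k = "length w"
  assume "\<not> ?thesis"
  then obtain u1 u2 v where u1: "u1 \<in> only_at_ends_strings Omega w (m + ?k)" "v = drop ?k u1"
    and u2: "u2 \<in> only_at_ends_strings Omega w (m + ?k - P)" "v = drop (?k - P) u2"
    by blast
  have P_bounds: "0 < P" "P < ?k"
    using P by (auto simp: is_period_def)
  have "u1 = w @ v"
    using u1 take_only_at_ends_strings by (metis append_take_drop_id)
  have "take (?k - P) u2 = take (?k - P) w"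
    using take_only_at_ends_strings[OF u2(1)] by (metis diff_le_self min.absorb1 take_take)
  then have "u2 = take (?k - P) w @ v"
    using u2(2) by (metis append_take_drop_id)
  then have "take (?k - P) w @ take P v = w"
    using take_only_at_ends_strings[OF u2(1)] P_bounds by (simp add: take_append)
  then have "take P v = drop (?k - P) w"
    by (metis append_take_drop_id same_append_eq)
  then have "take ?k (drop P u1) = w"
    using \<open>u1 = w @ v\<close> P_bounds is_period_drop_eq_take[OF P] by (simp add: take_append)
  moreover have "P + ?k \<le> length u1"
    using u1(1) m P_bounds by (simp add: only_at_ends_strings_def)
  ultimately have "occurs_at w u1 P"
    by (simp add: occurs_at_def)
  then show False
    using u1(1) m P_bounds by (auto simp: only_at_ends_strings_def)
qed

lemma card_only_at_ends_strings_add_le: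
  assumes "finite Omega" and P: "is_period w P" and m: "length w \<le> m"
  shows "card (only_at_ends_strings Omega w (m + length w))
           + card (only_at_ends_strings Omega w (m + length w - P))
         \<le> card (only_at_end_strings Omega w m)"
proof -
  let ?k = "length w"
  let ?B1 = "drop ?k ` only_at_ends_strings Omega w (m + ?k)"
  let ?B2 = "drop (?k - P) ` only_at_ends_strings Omega w (m + ?k - P)"
  have P_bounds: "0 < P" "P < ?k"
    using P by (auto simp: is_period_def)
  have "?B1 \<subseteq> only_at_end_strings Omega w m" and "?B2 \<subseteq> only_at_end_strings Omega w m"
    using drop_only_at_ends_strings[of _ Omega w "m + ?k" ?k]
      drop_only_at_ends_strings[of _ Omega w "m + ?k - P" "?k - P"] P_bounds m
    by force+
  then have "card (?B1 \<union> ?B2) \<le> card (only_at_end_strings Omega w m)"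
    using assms(1) by (simp add: card_mono finite_only_at_end_strings)
  moreover have "card (?B1 \<union> ?B2) = card ?B1 + card ?B2"
    using drop_only_at_ends_strings_disjoint[OF P m] assms(1)
    by (simp add: card_Un_disjoint finite_only_at_ends_strings)
  ultimately show ?thesis
    by (simp add: card_image inj_on_drop_only_at_ends_strings)
qed

lemma sum_window_telescope:
  fixes h H :: "nat \<Rightarrow> int" and q :: int
  assumes H_Suc: "\<And>j. H (Suc j) = q * h j - h (Suc j)" and "1 \<le> k" and "m \<le> M"
  shows "h M - (\<Sum>t\<in>{1..<k}. H (M + t))
           = h m - (\<Sum>t\<in>{1..<k}. H (m + t)) + (\<Sum>j\<in>{m..<M}. (q - 1) * h j - H (j + k))"
  using \<open>m \<le> M\<close>
proof (induction M rule: dec_induct)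
  case base
  show ?case by simp
next
  case (step M)
  have "(\<Sum>t\<in>{1..<k}. H (M + Suc t)) = (\<Sum>t\<in>{Suc 1..<Suc k}. H (M + t))"
    by (rule sum.shift_bounds_Suc_ivl[symmetric])
  also have "\<dots> = (\<Sum>t\<in>{1..<Suc k}. H (M + t)) - H (Suc M)"
    using \<open>1 \<le> k\<close> by (subst sum.atLeast_Suc_lessThan[of 1 "Suc k"]) auto
  also have "\<dots> = (\<Sum>t\<in>{1..<k}. H (M + t)) - H (Suc M) + H (M + k)"
    using \<open>1 \<le> k\<close> by (simp add: sum.atLeastLessThan_Suc)
  finally have "(\<Sum>t\<in>{1..<k}. H (Suc M + t))
      = (\<Sum>t\<in>{1..<k}. H (M + t)) - H (Suc M) + H (M + k)" by simp
  then show ?case using step.IH H_Suc[of M] \<open>m \<le> M\<close> by (simp add: algebra_simps)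
qed

lemma H_w_eq_0_if_not_period:
  assumes "finite Omega" and "0 < t" "t < length w" and "\<not> is_period w t"
  shows "H_w Omega w (length w + t) = 0"
proof -
  have "only_at_ends_strings Omega w (length w + t) = {}"
    using is_period_only_at_ends_strings assms(2-4) by blast
  then show ?thesis
    using H_w_eq_card_only_at_ends_strings[OF assms(1)] assms(2) by simp
qed

lemma H_w_increment_nonneg:
  assumes "finite Omega" and "2 \<le> card Omega" and "w \<noteq> []" and "length w \<le> j"
  shows "0 \<le> (int (card Omega) - 1) * int (h_w Omega w j) - H_w Omega w (j + length w)"
proof -
  have "0 < j"
    using assms(3,4) by (metis le_zero_eq length_0_conv not_gr_zero)
  then have "H_w Omega w (j + length w) \<le> int (h_w Omega w j)"
    using assms card_only_at_ends_strings_le[OF assms(1), of w j "j + length w"]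
    by (simp add: H_w_eq_card_only_at_ends_strings h_w_eq_card)
  moreover have "int (h_w Omega w j) \<le> (int (card Omega) - 1) * int (h_w Omega w j)"
    using assms(2) by (simp add: mult_le_cancel_right1)
  ultimately show ?thesis
    by linarith
qed

lemma H_w_increment_ge_period:
  assumes "finite Omega" and "2 \<le> card Omega" and P: "is_period w P" and "length w \<le> j"
  shows "H_w Omega w (j + length w - P)
           \<le> (int (card Omega) - 1) * int (h_w Omega w j) - H_w Omega w (j + length w)"
proof -
  have "0 < P" "P < length w"
    using P by (auto simp: is_period_def)
  then have "H_w Omega w (j + length w) + H_w Omega w (j + length w - P) \<le> int (h_w Omega w j)"
    using assms card_only_at_ends_strings_add_le[OF assms(1) P, of j]
    by (simp add: H_w_eq_card_only_at_ends_strings h_w_eq_card flip: of_nat_add)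
  moreover have "int (h_w Omega w j) \<le> (int (card Omega) - 1) * int (h_w Omega w j)"
    using assms(2) by (simp add: mult_le_cancel_right1)
  ultimately show ?thesis
    by linarith
qed

text \<open>Only periods \<open>t\<close> of \<open>w\<close> contribute to the left-hand side, and they all lie in
  \<open>[k - P, k)\<close> for the largest period \<open>P\<close>; the term for \<open>t\<close> is paid for by the
  increment at \<open>j = t + P < 2k\<close>.\<close>

lemma sum_H_w_le_sum_increments:
  assumes fin: "finite Omega" and q: "2 \<le> card Omega" and "w \<noteq> []"
    and n: "2 * length w \<le> n"
  shows "(\<Sum>t\<in>{1..<length w}. H_w Omega w (length w + t))
           \<le> (\<Sum>j\<in>{length w..<n}. (int (card Omega) - 1) * int (h_w Omega w j)
                                   - H_w Omega w (j + length w))"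
    (is "?lhs \<le> (\<Sum>j\<in>{?k..<n}. ?inc j)")
proof (cases "\<exists>p. is_period w p")
  case False
  then have "?lhs = 0"
    using H_w_eq_0_if_not_period[OF fin] by simp
  also have "0 \<le> (\<Sum>j\<in>{?k..<n}. ?inc j)"
    using H_w_increment_nonneg[OF fin q \<open>w \<noteq> []\<close>] by (intro sum_nonneg) simp
  finally show ?thesis .
next
  case True
  define P where "P = Max {p. is_period w p}"
  have "is_period w P"
    using Max_in[OF finite_periods] True unfolding P_def by auto
  then have P_bounds: "0 < P" "P < ?k"
    by (auto simp: is_period_def)
  have "?lhs = (\<Sum>t\<in>{?k - P..<?k}. H_w Omega w (?k + t))"
  proof (rule sum.mono_neutral_right)
    show "\<forall>t\<in>{1..<?k} - {?k - P..<?k}. H_w Omega w (?k + t) = 0"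
    proof
      fix t assume t: "t \<in> {1..<?k} - {?k - P..<?k}"
      then have "\<not> is_period w t"
        using is_period_le_add_Max[of w t] unfolding P_def[symmetric] by auto
      with t show "H_w Omega w (?k + t) = 0"
        using H_w_eq_0_if_not_period[OF fin] by simp
    qed
  qed (use P_bounds in auto)
  also have "\<dots> = (\<Sum>j\<in>{?k..<?k + P}. H_w Omega w (j + ?k - P))"
    using sum.shift_bounds_nat_ivl[of "\<lambda>j. H_w Omega w (j + ?k - P)" "?k - P" P ?k] P_bounds
    by (simp add: add.commute)
  also have "\<dots> \<le> (\<Sum>j\<in>{?k..<?k + P}. ?inc j)"
    using H_w_increment_ge_period[OF fin q \<open>is_period w P\<close>] by (intro sum_mono) simp
  also have "\<dots> \<le> (\<Sum>j\<in>{?k..<n}. ?inc j)"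
    using H_w_increment_nonneg[OF fin q \<open>w \<noteq> []\<close>] P_bounds n
    by (intro sum_mono2) auto
  finally show ?thesis .
qed

theorem corollary4p6:
  fixes Omega :: "'a set" and w :: "'a list" and n :: nat
  assumes "finite Omega" and "card Omega \<ge> 2" and "set w \<subseteq> Omega"
    and "n \<ge> 2 * length w"
  shows "int (h_w Omega w n) \<ge> (\<Sum>t\<in>{1..<length w}. H_w Omega w (n + t))"
proof (cases "w = []")
  case False
  let ?k = "length w"
  have "int (h_w Omega w n) - (\<Sum>t\<in>{1..<?k}. H_w Omega w (n + t))
      = int (h_w Omega w ?k) - (\<Sum>t\<in>{1..<?k}. H_w Omega w (?k + t))
        + (\<Sum>j\<in>{?k..<n}. (int (card Omega) - 1) * int (h_w Omega w j) - H_w Omega w (j + ?k))"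
    using False assms(4)
    by (intro sum_window_telescope) (auto simp: H_w_def Suc_le_eq)
  moreover have "h_w Omega w ?k = 1"
    using only_at_end_strings_length[OF assms(3)] by (simp add: h_w_eq_card)
  ultimately show ?thesis
    using sum_H_w_le_sum_increments[OF assms(1,2) False assms(4)] by linarith
qed simp

end
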